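(* In a synchronized communication system (possibly after some robots have left), a ring of length $2k\pi$ contains at most $k$ robots. Moreover, if no robot has left the system, a ring of length $2k\pi$ contains exactly $k$ robots.
   Context: Model. A system consists of pairwise disjoint unit circles $C_1,\dots,C_n$ in the plane (trajectories) and a communication range $r>0$. Its communication graph $G$ has vertex set $\{C_1,\dots,C_n\}$, $C_i,C_j$ adjacent iff the distance between their centres is at most $2+r$. Positions on a circle are angles (mod $2\pi$). For an edge $(i,j)$, the link position $\phi_{ij}$ is the angle of the point of $C_i$ closest to $C_j$. A schedule $F=(f,g)$ assigns each circle a starting angle $f(C_i)$ and direction $g(C_i)\in\{1,-1\}$; a robot following it on $C_i$ is at $f(C_i)+g(C_i)2\pi t$ at time $t$. $F$ is a synchronization schedule if $g(C_i)=-g(C_j)$ for adjacent circles and robots following $F$ on adjacent $C_i,C_j$ are at $\phi_{ij},\phi_{ji}$ at exactly the same times. A synchronized communication system (SCS) consists of $n$ robots, initially one per circle, following a synchronization schedule, with the switching rule: when a robot on $C_i$ reaches $\phi_{ij}$ and $C_j$ is empty, it instantly passes to $C_j$ (instantaneously) and follows the schedule of $C_j$; if $C_j$ has a robot, they meet and each stays on its circle. Robots may leave the system (possibly at different times); the remaining ones never leave. Rings. Trace a point moving along a circle $C_i$ in direction $g(C_i)$; whenever it reaches a link position $\phi_{ij}$ of its current circle, it passes to $C_j$ at $\phi_{ji}$ and continues in direction $g(C_j)$. The closed curve traced is a ring; the circles decompose into rings overlapping only at link positions. The length of a ring is the total length of the circle arcs forming it (it is a multiple of $2\pi$). A robot is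 in a ring if it lies on a point of that ring. *)

theory Defs
  imports "HOL-Analysis.Analysis"
begin

text \<open>Circles are indexed by 0..n-1; circle i is the unit circle centred at c i.
  Positions on a circle are real angles, considered modulo 2 pi.\<close>

definition ang_eq :: "real \<Rightarrow> real \<Rightarrow> bool" where
  "ang_eq a b \<longleftrightarrow> (\<exists>m::int. a - b = 2 * pi * of_int m)"

definition trajectory_system :: "nat \<Rightarrow> (nat \<Rightarrow> complex) \<Rightarrow> real \<Rightarrow> bool" where
  "trajectory_system n c rr \<longleftrightarrow>
     rr > 0 \<and> (\<forall>i<n. \<forall>j<n. i \<noteq> j \<longrightarrow> dist (c i) (c j) > 2)"

definition adj :: "nat \<Rightarrow> (nat \<Rightarrow> complex) \<Rightarrow> real \<Rightarrow> nat \<Rightarrow> nat \<Rightarrow> bool" where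
  "adj n c rr i j \<longleftrightarrow> i < n \<and> j < n \<and> i \<noteq> j \<and> dist (c i) (c j) \<le> 2 + rr"

text \<open>Link position: angle of the point of circle i closest to circle j.\<close>
definition link :: "(nat \<Rightarrow> complex) \<Rightarrow> nat \<Rightarrow> nat \<Rightarrow> real" where
  "link c i j = Arg (c j - c i)"

text \<open>Well-definedness of the model: distinct neighbours of a circle have distinct link positions.\<close>
definition distinct_links :: "nat \<Rightarrow> (nat \<Rightarrow> complex) \<Rightarrow> real \<Rightarrow> bool" where
  "distinct_links n c rr \<longleftrightarrow>
     (\<forall>i j k. adj n c rr i j \<and> adj n c rr i k \<and> j \<noteq> k \<longrightarrow> \<not> ang_eq (link c i j) (link c i k))"

definition sched :: "(nat \<Rightarrow> real) \<Rightarrow> (nat \<Rightarrow> int) \<Rightarrow> nat \<Rightarrow> real \<Rightarrow> real" where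
  "sched f g i t = f i + of_int (g i) * (2 * pi * t)"

definition sync_schedule ::
  "nat \<Rightarrow> (nat \<Rightarrow> complex) \<Rightarrow> real \<Rightarrow> (nat \<Rightarrow> real) \<Rightarrow> (nat \<Rightarrow> int) \<Rightarrow> bool" where
  "sync_schedule n c rr f g \<longleftrightarrow>
     (\<forall>i<n. g i = 1 \<or> g i = -1) \<and>
     (\<forall>i j. adj n c rr i j \<longrightarrow>
        g i = - g j \<and>
        (\<forall>t. ang_eq (sched f g i t) (link c i j) \<longleftrightarrow> ang_eq (sched f g j t) (link c j i)))"

definition hit_dist :: "(nat \<Rightarrow> complex) \<Rightarrow> (nat \<Rightarrow> int) \<Rightarrow> nat \<Rightarrow> real \<Rightarrow> nat \<Rightarrow> real" where
  "hit_dist c g i th j =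
     (THE d. 0 < d \<and> d \<le> 2 * pi \<and> ang_eq (th + of_int (g i) * d) (link c i j))"

definition nbrs :: "nat \<Rightarrow> (nat \<Rightarrow> complex) \<Rightarrow> real \<Rightarrow> nat \<Rightarrow> nat set" where
  "nbrs n c rr i = {j. adj n c rr i j}"

text \<open>Length of the arc traversed on the current circle before passing to the next one.\<close>
definition step_len :: "nat \<Rightarrow> (nat \<Rightarrow> complex) \<Rightarrow> real \<Rightarrow> (nat \<Rightarrow> int) \<Rightarrow> nat \<times> real \<Rightarrow> real" where
  "step_len n c rr g p =
     (if nbrs n c rr (fst p) = {} then 2 * pi
      else Min (hit_dist c g (fst p) (snd p) ` nbrs n c rr (fst p)))"

text \<open>The state (circle, angle) just after passing to the next circle.\<close>
definition ring_next :: "nat \<Rightarrow> (nat \<Rightarrow> complex) \<Rightarrow> real \<Rightarrow> (nat \<Rightarrow> int) \<Rightarrow> nat \<times> real \<Rightarrow> nat \<times> real" where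
  "ring_next n c rr g p =
     (if nbrs n c rr (fst p) = {} then (fst p, snd p + of_int (g (fst p)) * (2 * pi))
      else (let j = (SOME j. j \<in> nbrs n c rr (fst p) \<and>
                            hit_dist c g (fst p) (snd p) j = step_len n c rr g p)
            in (j, link c j (fst p))))"

definition ring_state :: "nat \<Rightarrow> (nat \<Rightarrow> complex) \<Rightarrow> real \<Rightarrow> (nat \<Rightarrow> int) \<Rightarrow> nat \<Rightarrow> real \<Rightarrow> nat \<Rightarrow> nat \<times> real" where
  "ring_state n c rr g i0 th0 m = (ring_next n c rr g ^^ m) (i0, th0)"

definition ring_par :: "nat \<Rightarrow> (nat \<Rightarrow> complex) \<Rightarrow> real \<Rightarrow> (nat \<Rightarrow> int) \<Rightarrow> nat \<Rightarrow> real \<Rightarrow> nat \<Rightarrow> real" where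
  "ring_par n c rr g i0 th0 m = (\<Sum>l<m. step_len n c rr g (ring_state n c rr g i0 th0 l))"

text \<open>The traced point, at arc-length parameter s, is at (circle, angle) p
  (at a link position it is counted on the circle it has just passed to).\<close>
definition on_trace ::
  "nat \<Rightarrow> (nat \<Rightarrow> complex) \<Rightarrow> real \<Rightarrow> (nat \<Rightarrow> int) \<Rightarrow> nat \<Rightarrow> real \<Rightarrow> real \<Rightarrow> nat \<times> real \<Rightarrow> bool" where
  "on_trace n c rr g i0 th0 s p \<longleftrightarrow>
     (\<exists>m. ring_par n c rr g i0 th0 m \<le> s \<and> s < ring_par n c rr g i0 th0 (Suc m) \<and>
          fst p = fst (ring_state n c rr g i0 th0 m) \<and>
          ang_eq (snd p) (snd (ring_state n c rr g i0 th0 m)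
                   + of_int (g (fst p)) * (s - ring_par n c rr g i0 th0 m)))"

text \<open>The ring through the point at angle th0 of circle i0, as a set of (circle, angle) points.\<close>
definition ring_pts :: "nat \<Rightarrow> (nat \<Rightarrow> complex) \<Rightarrow> real \<Rightarrow> (nat \<Rightarrow> int) \<Rightarrow> nat \<Rightarrow> real \<Rightarrow> (nat \<times> real) set" where
  "ring_pts n c rr g i0 th0 = {p. \<exists>s\<ge>0. on_trace n c rr g i0 th0 s p}"

definition ring_length_is ::
  "nat \<Rightarrow> (nat \<Rightarrow> complex) \<Rightarrow> real \<Rightarrow> (nat \<Rightarrow> int) \<Rightarrow> nat \<Rightarrow> real \<Rightarrow> real \<Rightarrow> bool" where
  "ring_length_is n c rr g i0 th0 L \<longleftrightarrow>
     L > 0 \<and> on_trace n c rr g i0 th0 L (i0, th0) \<and>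
     (\<forall>s. 0 < s \<and> s < L \<longrightarrow> \<not> on_trace n c rr g i0 th0 s (i0, th0))"

text \<open>Robots are indexed 0..n-1, robot r starts on circle r. lv r is its leaving time
  (None: never leaves); it is in the system at times t < leaving time.
  pos r t is the circle robot r is on at time t; its angle is sched f g (pos r t) t.\<close>

definition present :: "(nat \<Rightarrow> real option) \<Rightarrow> nat \<Rightarrow> real \<Rightarrow> bool" where
  "present lv r t \<longleftrightarrow> (case lv r of None \<Rightarrow> True | Some tau \<Rightarrow> t < tau)"

definition left_lim :: "(nat \<Rightarrow> real \<Rightarrow> nat) \<Rightarrow> nat \<Rightarrow> real \<Rightarrow> nat \<Rightarrow> bool" where
  "left_lim pos r t i \<longleftrightarrow> (\<exists>e>0. \<forall>s. t - e < s \<and> s < t \<longrightarrow> pos r s = i)"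

text \<open>Circle j is empty at time t (just before any switch happening at t).\<close>
definition circle_empty :: "nat \<Rightarrow> (nat \<Rightarrow> real option) \<Rightarrow> (nat \<Rightarrow> real \<Rightarrow> nat) \<Rightarrow> nat \<Rightarrow> real \<Rightarrow> bool" where
  "circle_empty n lv pos j t \<longleftrightarrow> \<not> (\<exists>r'<n. present lv r' t \<and> left_lim pos r' t j)"

definition scs_run ::
  "nat \<Rightarrow> (nat \<Rightarrow> complex) \<Rightarrow> real \<Rightarrow> (nat \<Rightarrow> real) \<Rightarrow> (nat \<Rightarrow> int) \<Rightarrow>
   (nat \<Rightarrow> real option) \<Rightarrow> (nat \<Rightarrow> real \<Rightarrow> nat) \<Rightarrow> bool" where
  "scs_run n c rr f g lv pos \<longleftrightarrow>
     (\<forall>r<n. pos r 0 = r) \<and>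
     (\<forall>r<n. \<forall>t\<ge>0. present lv r t \<longrightarrow> pos r t < n) \<and>
     (\<forall>r<n. \<forall>t\<ge>0. present lv r t \<longrightarrow> (\<exists>e>0. \<forall>s. t \<le> s \<and> s < t + e \<longrightarrow> pos r s = pos r t)) \<and>
     (\<forall>r<n. \<forall>t>0. present lv r t \<longrightarrow>
        (\<exists>i. left_lim pos r t i \<and>
           ((\<exists>j. adj n c rr i j \<and> ang_eq (sched f g i t) (link c i j) \<and>
                 circle_empty n lv pos j t \<and> pos r t = j) \<or>
            (\<not> (\<exists>j. adj n c rr i j \<and> ang_eq (sched f g i t) (link c i j) \<and>
                 circle_empty n lv pos j t) \<and> pos r t = i))))"

definition robots_in_ring ::
  "nat \<Rightarrow> (nat \<Rightarrow> complex) \<Rightarrow> real \<Rightarrow> (nat \<Rightarrow> real) \<Rightarrow> (nat \<Rightarrow> int) \<Rightarrow>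
   (nat \<Rightarrow> real option) \<Rightarrow> (nat \<Rightarrow> real \<Rightarrow> nat) \<Rightarrow> nat \<Rightarrow> real \<Rightarrow> real \<Rightarrow> nat set" where
  "robots_in_ring n c rr f g lv pos i0 th0 t =
     {r. r < n \<and> present lv r t \<and> (pos r t, sched f g (pos r t) t) \<in> ring_pts n c rr g i0 th0}"

end

theory Submission
  imports Defs
begin

text \<open>
  Adjacent circles reach their common link position at the same times, so a point that traces
  a ring starting in phase with the schedule stays in phase with it all along the ring. Hence
  at time t the ring passes through the scheduled position of a circle exactly at the arc
  parameters congruent to a fixed value modulo 2 pi, and a ring of length 2 k pi, which repeats
  no point within one period, carries the scheduled positions of exactly k circles. Robots
  always sit at the scheduled position of their circle, and two robots never share a circle:
  a first collision time cannot exist, since just before it the robots come from different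
  circles, a robot only switches into an empty circle, and two switches into the same circle
  at once would put two distinct link positions at the same place. So the robots on the ring
  inject into these k circles, and biject onto them when no robot has left.
\<close>

section \<open>Angles modulo 2 pi\<close>

lemma ang_eq_refl [simp]: "ang_eq a a"
  unfolding ang_eq_def by (rule exI[of _ 0]) simp

lemma ang_eq_sym: "ang_eq a b \<Longrightarrow> ang_eq b a"
  unfolding ang_eq_def by (metis minus_diff_eq mult_minus_right of_int_minus)

lemma ang_eq_trans: "ang_eq a b \<Longrightarrow> ang_eq b d \<Longrightarrow> ang_eq a d"
proof -
  assume "ang_eq a b" "ang_eq b d"
  then obtain m1 m2 :: int where "a - b = 2*pi*m1" "b - d = 2*pi*m2"
    unfolding ang_eq_def by blast
  then have "a - d = 2*pi * of_int (m1 + m2)" by (simp add: algebra_simps)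
  then show ?thesis unfolding ang_eq_def by blast
qed

lemma ang_eq_add_right: "ang_eq a b \<Longrightarrow> ang_eq (a + x) (b + x)"
  unfolding ang_eq_def by simp

lemma ang_eq_add_period: "ang_eq (a + 2*pi * of_int m) a"
  unfolding ang_eq_def by auto

lemma ang_eq_advance:
  "ang_eq u (v + e * d) \<Longrightarrow> ang_eq (u + e * x) (v + e * (d + x))"
  using ang_eq_add_right[of u "v + e * d" "e * x"] by (simp add: algebra_simps)

lemma ang_eq_close_eq:
  assumes "ang_eq x y" "\<bar>x - y\<bar> < 2*pi"
  shows "x = y"
proof -
  obtain m :: int where m: "x - y = 2*pi*m" using assms(1) unfolding ang_eq_def by blast
  then have "2*pi * \<bar>of_int m\<bar> < 2*pi * 1" using assms(2) by (simp add: abs_mult)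
  then have "\<bar>of_int m :: real\<bar> < 1" using pi_gt_zero by (simp only: mult_less_cancel_left_pos)
  then have "\<bar>m\<bar> < 1" by linarith
  then show ?thesis using m by simp
qed

lemma ang_eq_times_2pi_iff: "ang_eq (2*pi*t) (2*pi*u) \<longleftrightarrow> (\<exists>z::int. t - u = of_int z)"
  unfolding ang_eq_def by (simp flip: right_diff_distrib)

lemma ang_eq_signed_cancel:
  fixes e :: int
  assumes "e = 1 \<or> e = -1"
  shows "ang_eq (a + of_int e * x) (a + of_int e * y) \<longleftrightarrow> ang_eq x y"
proof -
  have "ang_eq (a + of_int e * x) (a + of_int e * y) \<longleftrightarrow>
      (if e = 1 then ang_eq x y else ang_eq y x)"
    using assms unfolding ang_eq_def by (auto simp: algebra_simps)
  then show ?thesis using ang_eq_sym by auto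
qed

lemma ang_eq_signed_reachable:
  fixes e :: int
  assumes "e = 1 \<or> e = -1"
  shows "\<exists>d. 0 \<le> d \<and> d < 2*pi \<and> ang_eq (th + of_int e * d) a"
proof -
  define x where "x = of_int e * (a - th)"
  define d where "d = x - 2*pi * of_int \<lfloor>x / (2*pi)\<rfloor>"
  have "of_int \<lfloor>x / (2*pi)\<rfloor> \<le> x / (2*pi)" "x / (2*pi) < of_int \<lfloor>x / (2*pi)\<rfloor> + 1"
    by linarith+
  then have "of_int \<lfloor>x / (2*pi)\<rfloor> * (2*pi) \<le> x" "x < (of_int \<lfloor>x / (2*pi)\<rfloor> + 1) * (2*pi)"
    using pi_gt_zero by (simp_all only: pos_le_divide_eq pos_divide_less_eq)
  then have "0 \<le> d" "d < 2*pi" unfolding d_def by (auto simp: algebra_simps)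
  moreover have "(of_int e :: real) * of_int e = 1" using assms by auto
  then have "th + of_int e * d = a + 2*pi * of_int (- e * \<lfloor>x / (2*pi)\<rfloor>)"
    unfolding d_def x_def by (simp add: algebra_simps)
  then have "ang_eq (th + of_int e * d) a" by (metis ang_eq_add_period)
  ultimately show ?thesis by blast
qed

lemma ang_eq_sched_iff:
  assumes "g i = 1 \<or> g i = -1"
  shows "ang_eq (sched f g i t) (sched f g i u) \<longleftrightarrow> (\<exists>z::int. t - u = of_int z)"
  unfolding sched_def ang_eq_signed_cancel[OF assms] ang_eq_times_2pi_iff ..

lemma sched_shift: "sched f g i (t + x / (2*pi)) = sched f g i t + of_int (g i) * x"
  unfolding sched_def by (simp add: algebra_simps)

lemma hit_dist_eqI:
  assumes gi: "g i = 1 \<or> g i = -1" and d: "0 < d" "d \<le> 2*pi"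
    and hit: "ang_eq (th + of_int (g i) * d) (link c i j)"
  shows "hit_dist c g i th j = d"
  unfolding hit_dist_def
proof (rule the_equality)
  fix d' assume d': "0 < d' \<and> d' \<le> 2*pi \<and> ang_eq (th + of_int (g i) * d') (link c i j)"
  then have "ang_eq (th + of_int (g i) * d') (th + of_int (g i) * d)"
    using hit ang_eq_sym ang_eq_trans by blast
  then show "d' = d" using d d' by (intro ang_eq_close_eq) (auto simp: ang_eq_signed_cancel[OF gi])
qed (use d hit in simp)

lemma hit_dist:
  assumes gi: "g i = 1 \<or> g i = -1"
  shows "0 < hit_dist c g i th j \<and> hit_dist c g i th j \<le> 2*pi \<and>
    ang_eq (th + of_int (g i) * hit_dist c g i th j) (link c i j)"
proof -
  obtain d where d: "0 \<le> d" "d < 2*pi" "ang_eq (th + of_int (g i) * d) (link c i j)"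
    using ang_eq_signed_reachable[OF gi] by blast
  define d' where "d' = (if d = 0 then 2*pi else d)"
  have "ang_eq (th + of_int (g i) * d') (th + of_int (g i) * d)"
    unfolding d'_def ang_eq_signed_cancel[OF gi] using ang_eq_add_period[of 0 1] by simp
  then have "ang_eq (th + of_int (g i) * d') (link c i j)" using d(3) by (rule ang_eq_trans)
  moreover have "0 < d'" "d' \<le> 2*pi" using d unfolding d'_def by auto
  ultimately show ?thesis using hit_dist_eqI[of g i, OF gi] by metis
qed

section \<open>Tracing a ring\<close>

locale traced_ring =
  fixes n :: nat and c :: "nat \<Rightarrow> complex" and rr :: real and f :: "nat \<Rightarrow> real"
    and g :: "nat \<Rightarrow> int" and i0 :: nat and th0 :: real
  assumes sync: "sync_schedule n c rr f g" and start: "i0 < n"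
begin

abbreviation "nb \<equiv> nbrs n c rr"
abbreviation "sl \<equiv> step_len n c rr g"
abbreviation "nxt \<equiv> ring_next n c rr g"
abbreviation "state \<equiv> ring_state n c rr g i0 th0"
abbreviation "par \<equiv> ring_par n c rr g i0 th0"
abbreviation "traced \<equiv> on_trace n c rr g i0 th0"

lemma direction: "i < n \<Longrightarrow> g i = 1 \<or> g i = -1"
  using sync unfolding sync_schedule_def by blast

lemma nbrs_sym: "j \<in> nb i \<Longrightarrow> i \<in> nb j"
  unfolding nbrs_def adj_def by (auto simp: dist_commute)

lemma nbrs_bound: "j \<in> nb i \<Longrightarrow> i < n \<and> j < n"
  unfolding nbrs_def adj_def by auto

lemma finite_nbrs: "finite (nb i)"
  by (rule finite_subset[of _ "{..<n}"]) (auto dest: nbrs_bound)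

lemma step_len_pos: "sl p > 0"
proof (cases "nb (fst p) = {}")
  case False
  then have "fst p < n" using nbrs_bound by blast
  then have "\<forall>x \<in> hit_dist c g (fst p) (snd p) ` nb (fst p). x > 0"
    using hit_dist[of g "fst p", OF direction] by blast
  then show ?thesis using False finite_nbrs unfolding step_len_def by simp
qed (simp add: step_len_def)

lemma ring_next_nbr:
  assumes "nb (fst p) \<noteq> {}"
  shows "\<exists>j \<in> nb (fst p). hit_dist c g (fst p) (snd p) j = sl p \<and> nxt p = (j, link c j (fst p))"
proof -
  let ?h = "hit_dist c g (fst p) (snd p)"
  have "Min (?h ` nb (fst p)) \<in> ?h ` nb (fst p)"
    using assms finite_nbrs by (intro Min_in) auto
  then have "\<exists>j. j \<in> nb (fst p) \<and> ?h j = sl p" using assms unfolding step_len_def by auto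
  then have "(SOME j. j \<in> nb (fst p) \<and> ?h j = sl p) \<in> nb (fst p) \<and>
      ?h (SOME j. j \<in> nb (fst p) \<and> ?h j = sl p) = sl p"
    by (rule someI_ex)
  then show ?thesis using assms unfolding ring_next_def Let_def by auto
qed

lemma sched_phase_exists: "\<exists>tau. ang_eq th0 (sched f g i0 tau)"
proof -
  have "sched f g i0 (of_int (g i0) * (th0 - f i0) / (2*pi)) = th0"
    unfolding sched_def using direction[OF start] by auto
  then show ?thesis by (metis ang_eq_refl)
qed

lemma state_0: "state 0 = (i0, th0)"
  unfolding ring_state_def by simp

lemma state_Suc: "state (Suc m) = nxt (state m)"
  unfolding ring_state_def by simp

lemma state_add: "state (m + l) = (nxt ^^ l) (state m)"
  unfolding ring_state_def by (metis add.commute comp_apply funpow_add)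

lemma par_0: "par 0 = 0"
  unfolding ring_par_def by simp

lemma par_Suc: "par (Suc m) = par m + sl (state m)"
  unfolding ring_par_def by simp

lemma par_strict_mono: "strict_mono par"
  by (rule strict_monoI_Suc) (simp add: par_Suc step_len_pos)

lemma par_mono: "m \<le> m' \<Longrightarrow> par m \<le> par m'"
  using strict_mono_mono[OF par_strict_mono] by (simp add: monoD)

lemma par_add_diff: "par (m + l) - par m = (\<Sum>j<l. sl (state (m + j)))"
  by (induction l) (auto simp: par_Suc)

lemma par_interval_unique:
  assumes "par m \<le> s" "s < par (Suc m)" "par m' \<le> s" "s < par (Suc m')"
  shows "m = m'"
  using par_mono[of "Suc m" m'] par_mono[of "Suc m'" m] assms by (cases m m' rule: linorder_cases) auto

lemma par_interval_exists:
  assumes "0 \<le> s" "s < par M"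
  shows "\<exists>m<M. par m \<le> s \<and> s < par (Suc m)"
  using assms
proof (induction M)
  case (Suc M)
  then show ?case by (cases "s < par M") (auto intro: less_SucI)
qed (simp add: par_0)

end

locale linked_ring = traced_ring +
  assumes linked: "nb i0 \<noteq> {}"
begin

lemma state_linked: "fst (state m) < n \<and> nb (fst (state m)) \<noteq> {}"
proof (induction m)
  case (Suc m)
  then obtain j where j: "j \<in> nb (fst (state m))" "nxt (state m) = (j, link c j (fst (state m)))"
    using ring_next_nbr by blast
  have "fst (state m) \<in> nb j" using j(1) by (rule nbrs_sym)
  then show ?case using j nbrs_bound by (auto simp: state_Suc)
qed (use linked start in \<open>simp add: state_0\<close>)

lemma step_len_advance:
  assumes linked_p: "nb (fst p) \<noteq> {}" and same_circle: "fst q = fst p"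
    and d: "0 \<le> d" "d < sl p" and q: "ang_eq (snd q) (snd p + of_int (g (fst p)) * d)"
  shows "sl p = d + sl q \<and> nxt p = nxt q"
proof -
  let ?i = "fst p"
  let ?hp = "hit_dist c g ?i (snd p)" and ?hq = "hit_dist c g ?i (snd q)"
  have gi: "g ?i = 1 \<or> g ?i = -1" using linked_p nbrs_bound direction by blast
  have sl_p: "sl p = Min (?hp ` nb ?i)" and sl_q: "sl q = Min (?hq ` nb ?i)"
    using linked_p same_circle unfolding step_len_def by simp_all
  have hq: "?hq j = ?hp j - d" if "j \<in> nb ?i" for j
  proof -
    have "sl p \<le> ?hp j" unfolding sl_p using that finite_nbrs by simp
    moreover have hp: "0 < ?hp j \<and> ?hp j \<le> 2*pi \<and> ang_eq (snd p + of_int (g ?i) * ?hp j) (link c ?i j)"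
      by (rule hit_dist[of g ?i, OF gi])
    moreover have "ang_eq (snd q + of_int (g ?i) * (?hp j - d)) (snd p + of_int (g ?i) * ?hp j)"
      using ang_eq_advance[OF q, of "?hp j - d"] by simp
    then have "ang_eq (snd q + of_int (g ?i) * (?hp j - d)) (link c ?i j)"
      using hp ang_eq_trans by blast
    ultimately show ?thesis using hit_dist_eqI[of g ?i, OF gi] d by simp
  qed
  then have "?hq ` nb ?i = (\<lambda>x. x - d) ` (?hp ` nb ?i)" by (auto simp: image_image)
  then have sl: "sl q = sl p - d" unfolding sl_q sl_p
    using mono_Min_commute[of "\<lambda>x. x - d" "?hp ` nb ?i"] finite_nbrs linked_p
    by (simp add: monoI)
  moreover have "(\<lambda>j. j \<in> nb ?i \<and> ?hq j = sl q) = (\<lambda>j. j \<in> nb ?i \<and> ?hp j = sl p)"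
    using hq sl by (auto simp: fun_eq_iff)
  then have "nxt p = nxt q" unfolding ring_next_def using same_circle linked_p by (simp add: Let_def)
  ultimately show ?thesis by simp
qed

text \<open>The phase survives each passage to the next circle because link times are synchronized.\<close>
lemma state_sched:
  assumes "ang_eq th0 (sched f g i0 tau)"
  shows "ang_eq (snd (state m)) (sched f g (fst (state m)) (tau + par m / (2*pi)))"
proof (induction m)
  case (Suc m)
  let ?p = "state m"
  let ?i = "fst ?p" and ?t = "tau + par (Suc m) / (2*pi)"
  obtain j where j: "j \<in> nb ?i" "hit_dist c g ?i (snd ?p) j = sl ?p" "nxt ?p = (j, link c j ?i)"
    using ring_next_nbr state_linked by blast
  have gi: "g ?i = 1 \<or> g ?i = -1" using direction state_linked by blast
  have t: "?t = (tau + par m / (2*pi)) + sl ?p / (2*pi)"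
    by (simp add: par_Suc add_divide_distrib)
  have "sched f g ?i ?t = sched f g ?i (tau + par m / (2*pi)) + of_int (g ?i) * sl ?p"
    by (subst t) (rule sched_shift)
  then have "ang_eq (sched f g ?i ?t) (snd ?p + of_int (g ?i) * sl ?p)"
    using ang_eq_add_right[OF ang_eq_sym[OF Suc.IH]] by simp
  moreover have "ang_eq (snd ?p + of_int (g ?i) * sl ?p) (link c ?i j)"
    using hit_dist[of g ?i, OF gi, of c "snd ?p" j] j(2) by simp
  ultimately have "ang_eq (sched f g ?i ?t) (link c ?i j)" by (rule ang_eq_trans)
  moreover have "adj n c rr ?i j" using j(1) unfolding nbrs_def by simp
  ultimately have "ang_eq (sched f g j ?t) (link c j ?i)"
    using sync unfolding sync_schedule_def by blast
  then show ?case using j(3) by (simp add: state_Suc ang_eq_sym)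
qed (use assms in \<open>simp add: state_0 par_0\<close>)

lemma traced_sched:
  assumes "ang_eq th0 (sched f g i0 tau)" "traced s p"
  shows "ang_eq (snd p) (sched f g (fst p) (tau + s / (2*pi)))"
proof -
  obtain m where m: "fst p = fst (state m)"
    "ang_eq (snd p) (snd (state m) + of_int (g (fst p)) * (s - par m))"
    using assms(2) unfolding on_trace_def by blast
  have "tau + s / (2*pi) = (tau + par m / (2*pi)) + (s - par m) / (2*pi)"
    by (simp add: diff_divide_distrib)
  then have "sched f g (fst p) (tau + s / (2*pi)) =
      sched f g (fst p) (tau + par m / (2*pi)) + of_int (g (fst p)) * (s - par m)"
    by (simp only: sched_shift)
  moreover have "ang_eq (snd (state m) + of_int (g (fst p)) * (s - par m))
      (sched f g (fst p) (tau + par m / (2*pi)) + of_int (g (fst p)) * (s - par m))"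
    using ang_eq_add_right[OF state_sched[OF assms(1), of m]] m(1) by simp
  ultimately show ?thesis using ang_eq_trans[OF m(2)] by simp
qed

lemma traced_0: "traced 0 (i0, th0)"
  unfolding on_trace_def using step_len_pos
  by (intro exI[of _ 0]) (simp add: state_0 par_0 par_Suc)

lemma traced_next_state:
  assumes "par m \<le> a" "a < par (Suc m)" "fst q = fst (state m)"
    "ang_eq (snd q) (snd (state m) + of_int (g (fst q)) * (a - par m))"
  shows "par (Suc m) = a + sl q \<and> state (Suc m) = nxt q"
  using step_len_advance[of "state m" q "a - par m"] state_linked assms
  by (auto simp: par_Suc state_Suc)

lemma traced_shift:
  assumes same: "state m = state m'" and p: "traced s p" and "par m \<le> s"
  shows "traced (s + (par m' - par m)) p"
proof -
  obtain l where L: "par l \<le> s" "s < par (Suc l)" "fst p = fst (state l)"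
    "ang_eq (snd p) (snd (state l) + of_int (g (fst p)) * (s - par l))"
    using p unfolding on_trace_def by blast
  have "m \<le> l" using par_mono[of "Suc l" m] L(2) \<open>par m \<le> s\<close> by (cases "m \<le> l") auto
  then obtain y where l: "l = m + y" using le_Suc_ex by blast
  have st: "state (m' + j) = state (m + j)" for j
    using same by (simp only: state_add)
  have pr: "par (m' + j) = par (m + j) + (par m' - par m)" for j
    using par_add_diff[of m' j] par_add_diff[of m j] by (simp add: st)
  have "par (m' + y) \<le> s + (par m' - par m)" "s + (par m' - par m) < par (Suc (m' + y))"
    using pr[of y] pr[of "Suc y"] L(1,2) l by simp_all
  moreover have "fst p = fst (state (m' + y))" using L(3) st[of y] l by simp
  moreover have e: "s + (par m' - par m) - par (m' + y) = s - par l" using pr[of y] l by simp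
  have "ang_eq (snd p) (snd (state (m' + y)) + of_int (g (fst p)) * (s + (par m' - par m) - par (m' + y)))"
    unfolding st[of y] e using L(4) l by simp
  ultimately show ?thesis unfolding on_trace_def by blast
qed

lemma traced_continuation:
  assumes qa: "traced a q" and qb: "traced b q" and p: "traced (a + x) p" and x: "x \<ge> 0"
  shows "traced (b + x) p"
proof -
  obtain ma where A: "par ma \<le> a" "a < par (Suc ma)" "fst q = fst (state ma)"
    "ang_eq (snd q) (snd (state ma) + of_int (g (fst q)) * (a - par ma))"
    using qa unfolding on_trace_def by blast
  obtain mb where B: "par mb \<le> b" "b < par (Suc mb)" "fst q = fst (state mb)"
    "ang_eq (snd q) (snd (state mb) + of_int (g (fst q)) * (b - par mb))"
    using qb unfolding on_trace_def by blast
  obtain m where M: "par m \<le> a + x" "a + x < par (Suc m)" "fst p = fst (state m)"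
    "ang_eq (snd p) (snd (state m) + of_int (g (fst p)) * (a + x - par m))"
    using p unfolding on_trace_def by blast
  have NA: "par (Suc ma) = a + sl q" "state (Suc ma) = nxt q"
    using traced_next_state[OF A] by simp_all
  have NB: "par (Suc mb) = b + sl q" "state (Suc mb) = nxt q"
    using traced_next_state[OF B] by simp_all
  have "ma \<le> m" using par_mono[of "Suc m" ma] A M x by (cases "ma \<le> m") auto
  then consider (same_arc) "m = ma" | (later_arc) "Suc ma \<le> m" by linarith
  then show ?thesis
  proof cases
    case same_arc
    have "ang_eq (snd p) (snd (state ma) + of_int (g (fst q)) * (a + x - par ma))"
      using M(3,4) A(3) same_arc by simp
    moreover have "ang_eq (snd q + of_int (g (fst q)) * x) (snd (state ma) + of_int (g (fst q)) * (a + x - par ma))"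
      using ang_eq_advance[OF A(4), of x] by (simp add: diff_add_eq)
    ultimately have "ang_eq (snd p) (snd q + of_int (g (fst q)) * x)"
      using ang_eq_sym ang_eq_trans by blast
    moreover have "ang_eq (snd q + of_int (g (fst q)) * x) (snd (state mb) + of_int (g (fst p)) * (b + x - par mb))"
      using ang_eq_advance[OF B(4), of x] same_arc A(3) M(3) by (simp add: diff_add_eq)
    ultimately have "ang_eq (snd p) (snd (state mb) + of_int (g (fst p)) * (b + x - par mb))"
      by (rule ang_eq_trans)
    moreover have "par mb \<le> b + x" "b + x < par (Suc mb)" using B x M same_arc NA NB by auto
    ultimately show ?thesis unfolding on_trace_def using M(3) same_arc A(3) B(3) by auto
  next
    case later_arc
    then have "par (Suc ma) \<le> a + x" using par_mono M(1) order_trans by blast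
    then have "traced (a + x + (par (Suc mb) - par (Suc ma))) p"
      using traced_shift[OF _ p] NA(2) NB(2) by simp
    then show ?thesis using NA(1) NB(1) by (simp add: algebra_simps)
  qed
qed

end

section \<open>Scheduled positions on a ring\<close>

lemma phase_parameter_bounds:
  assumes "m < k"
  shows "0 \<le> 2*pi * (frac x + real m)" "2*pi * (frac x + real m) < 2 * real k * pi"
proof -
  have "frac x + real m < real k" using frac_lt_1[of x] assms by linarith
  then have "2*pi * (frac x + real m) < 2*pi * real k" by simp
  then show "2*pi * (frac x + real m) < 2 * real k * pi" by (simp add: algebra_simps)
qed (simp add: frac_ge_0)

definition ring_circles ::
  "nat \<Rightarrow> (nat \<Rightarrow> complex) \<Rightarrow> real \<Rightarrow> (nat \<Rightarrow> real) \<Rightarrow> (nat \<Rightarrow> int) \<Rightarrow> nat \<Rightarrow> real \<Rightarrow> real \<Rightarrow> nat set"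
  where "ring_circles n c rr f g i0 th0 t = {i. i < n \<and> (i, sched f g i t) \<in> ring_pts n c rr g i0 th0}"

locale closed_ring = linked_ring +
  fixes k :: nat
  assumes length: "ring_length_is n c rr g i0 th0 (2 * real k * pi)"
begin

abbreviation "L \<equiv> 2 * real k * pi"

lemma length_pos: "L > 0"
  using length unfolding ring_length_is_def by simp

lemma traced_L: "traced L (i0, th0)"
  using length unfolding ring_length_is_def by simp

lemma not_traced_before_L: "0 < s \<Longrightarrow> s < L \<Longrightarrow> \<not> traced s (i0, th0)"
  using length unfolding ring_length_is_def by simp

lemma traced_periodic: "traced (L + s) p \<Longrightarrow> s \<ge> 0 \<Longrightarrow> traced s p"
  using traced_continuation[OF traced_L traced_0, of s p] by simp

lemma traced_in_first_period:
  assumes "0 \<le> s" "traced s p"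
  shows "\<exists>s'. 0 \<le> s' \<and> s' < L \<and> traced s' p"
proof -
  obtain N where "s < real N * L" using ex_less_of_nat_mult[OF length_pos] by blast
  then show ?thesis using assms
  proof (induction N arbitrary: s)
    case (Suc N)
    show ?case
    proof (cases "s < L")
      case False
      then have "traced (s - L) p" using traced_periodic[of "s - L"] Suc.prems by simp
      moreover have "s - L < real N * L" using Suc.prems(1) by (simp add: algebra_simps)
      ultimately show ?thesis using Suc.IH[of "s - L"] False by simp
    qed (use Suc.prems in blast)
  qed simp
qed

text \<open>The first return to the start after L forbids any earlier repetition of a point.\<close>
lemma traced_inj:
  assumes "0 \<le> s1" "s1 < s2" "s2 < L" "traced s1 q" "traced s2 q"
  shows False
proof -
  have "traced (s1 + (L - s1)) (i0, th0)" using traced_L by simp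
  then have "traced (s2 + (L - s1)) (i0, th0)"
    by (rule traced_continuation[OF assms(4,5)]) (use assms in simp)
  then have "traced (L + (s2 - s1)) (i0, th0)" by (simp add: algebra_simps)
  then have "traced (s2 - s1) (i0, th0)" using traced_periodic assms by simp
  then show False using not_traced_before_L[of "s2 - s1"] assms by simp
qed

lemma traced_circle_unique: "traced s p \<Longrightarrow> traced s p' \<Longrightarrow> fst p = fst p'"
  unfolding on_trace_def using par_interval_unique by metis

lemma traced_circle_bound: "traced s p \<Longrightarrow> fst p < n"
  unfolding on_trace_def using state_linked by auto

lemma traced_change_angle:
  assumes "traced s p" "ang_eq (snd p) a"
  shows "traced s (fst p, a)"
proof -
  obtain m where m: "par m \<le> s" "s < par (Suc m)" "fst p = fst (state m)"
    "ang_eq (snd p) (snd (state m) + of_int (g (fst p)) * (s - par m))"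
    using assms(1) unfolding on_trace_def by blast
  have "ang_eq a (snd (state m) + of_int (g (fst p)) * (s - par m))"
    using ang_eq_trans[OF ang_eq_sym[OF assms(2)] m(4)] .
  then show ?thesis unfolding on_trace_def using m by auto
qed

lemma traced_exists:
  assumes "0 \<le> s" "s < L"
  shows "\<exists>p. traced s p"
proof -
  obtain mL where "L < par (Suc mL)" using traced_L unfolding on_trace_def by blast
  then obtain m where "par m \<le> s" "s < par (Suc m)"
    using par_interval_exists[of s "Suc mL"] assms by auto
  then show ?thesis unfolding on_trace_def
    by (intro exI[of _ "(fst (state m), snd (state m) + of_int (g (fst (state m))) * (s - par m))"]) auto
qed

lemma traced_in_phase_iff:
  assumes tau: "ang_eq th0 (sched f g i0 tau)" and p: "traced s p"
  shows "ang_eq (snd p) (sched f g (fst p) t) \<longleftrightarrow> (\<exists>z::int. t - tau - s / (2*pi) = of_int z)"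
proof -
  have "ang_eq (snd p) (sched f g (fst p) t) \<longleftrightarrow>
      ang_eq (sched f g (fst p) t) (sched f g (fst p) (tau + s / (2*pi)))"
    using traced_sched[OF tau p] ang_eq_sym ang_eq_trans by blast
  also have "\<dots> \<longleftrightarrow> (\<exists>z::int. t - tau - s / (2*pi) = of_int z)"
    using direction[OF traced_circle_bound[OF p]] by (simp add: ang_eq_sched_iff diff_diff_eq)
  finally show ?thesis .
qed

lemma in_phase_point_exists:
  assumes tau: "ang_eq th0 (sched f g i0 tau)" and "m < k"
  shows "\<exists>i. traced (2*pi * (frac (t - tau) + real m)) (i, sched f g i t)"
proof -
  let ?s = "2*pi * (frac (t - tau) + real m)"
  obtain p where p: "traced ?s p"
    using traced_exists phase_parameter_bounds[OF \<open>m < k\<close>, of "t - tau"] by blast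
  have "t - tau - ?s / (2*pi) = of_int (\<lfloor>t - tau\<rfloor> - int m)"
    unfolding frac_def by simp
  then have "ang_eq (snd p) (sched f g (fst p) t)"
    using traced_in_phase_iff[OF tau p] by blast
  then show ?thesis using traced_change_angle[OF p] by blast
qed

lemma in_phase_parameter:
  assumes tau: "ang_eq th0 (sched f g i0 tau)"
    and s: "0 \<le> s" "s < L" and p: "traced s (i, sched f g i t)"
  obtains m where "m < k" "s = 2*pi * (frac (t - tau) + real m)"
proof -
  obtain z :: int where z: "t - tau - s / (2*pi) = of_int z"
    using traced_in_phase_iff[OF tau p, of t] by auto
  define m where "m = nat (\<lfloor>t - tau\<rfloor> - z)"
  have "s / (2*pi) = frac (t - tau) + of_int (\<lfloor>t - tau\<rfloor> - z)"
    using z unfolding frac_def by simp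
  moreover have "0 \<le> s / (2*pi)" "s / (2*pi) < real k"
    using s pi_gt_zero by (simp_all add: divide_less_eq algebra_simps)
  ultimately have "s / (2*pi) = frac (t - tau) + real m" "m < k"
    unfolding m_def using frac_ge_0[of "t - tau"] frac_lt_1[of "t - tau"] by linarith+
  then show ?thesis using that by (simp add: field_simps)
qed

lemma card_ring_circles_linked: "card (ring_circles n c rr f g i0 th0 t) = k"
proof -
  obtain tau where tau: "ang_eq th0 (sched f g i0 tau)" using sched_phase_exists by blast
  define s where "s m = 2*pi * (frac (t - tau) + real m)" for m
  define circ where "circ m = (SOME i. traced (s m) (i, sched f g i t))" for m
  have circ: "traced (s m) (circ m, sched f g (circ m) t)" if "m < k" for m
    unfolding circ_def s_def using in_phase_point_exists[OF tau that] by (rule someI_ex)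
  have no_repeat: False if "m1 < m2" "m2 < k" "circ m1 = circ m2" for m1 m2
  proof -
    have "s m1 < s m2" using that(1) unfolding s_def by simp
    then show False
      using traced_inj[of "s m1" "s m2" "(circ m2, sched f g (circ m2) t)"] circ[of m1] circ[of m2]
        phase_parameter_bounds[of m1 k "t - tau"] phase_parameter_bounds[OF that(2), of "t - tau"] that
      unfolding s_def by simp
  qed
  have "inj_on circ {..<k}"
    by (rule inj_onI) (metis lessThan_iff linorder_neqE_nat no_repeat)
  moreover have "circ ` {..<k} = ring_circles n c rr f g i0 th0 t"
  proof (intro equalityI subsetI)
    fix i assume "i \<in> circ ` {..<k}"
    then obtain m where m: "m < k" "i = circ m" by blast
    have "0 \<le> s m" unfolding s_def using phase_parameter_bounds(1)[OF m(1)] .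
    then show "i \<in> ring_circles n c rr f g i0 th0 t"
      unfolding ring_circles_def ring_pts_def
      using circ[OF m(1)] traced_circle_bound[OF circ[OF m(1)]] m(2) by auto
  next
    fix i assume "i \<in> ring_circles n c rr f g i0 th0 t"
    then obtain s' where "s' \<ge> 0" "traced s' (i, sched f g i t)"
      unfolding ring_circles_def ring_pts_def by blast
    then obtain s0 where s0: "0 \<le> s0" "s0 < L" "traced s0 (i, sched f g i t)"
      using traced_in_first_period by blast
    then obtain m where m: "m < k" "s0 = s m"
      using in_phase_parameter[OF tau] unfolding s_def by blast
    then have "i = circ m" using traced_circle_unique[OF s0(3)] circ[OF m(1)] by simp
    then show "i \<in> circ ` {..<k}" using \<open>m < k\<close> by simp
  qed
  ultimately show ?thesis by (metis card_image card_lessThan)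
qed

end

locale isolated_ring = traced_ring +
  fixes k :: nat
  assumes isolated: "nb i0 = {}"
    and length: "ring_length_is n c rr g i0 th0 (2 * real k * pi)"
begin

lemma state_isolated: "state m = (i0, th0 + of_int (g i0) * (2*pi) * real m)"
  by (induction m) (simp_all add: state_0 state_Suc ring_next_def isolated algebra_simps)

lemma par_isolated: "par m = 2*pi * real m"
  by (induction m) (simp_all add: par_0 par_Suc step_len_def state_isolated isolated algebra_simps)

lemma traced_isolated_circle: "traced s p \<Longrightarrow> fst p = i0"
  unfolding on_trace_def by (auto simp: state_isolated)

lemma isolated_length: "k = 1"
proof -
  have "ang_eq th0 (th0 + of_int (g i0) * (2*pi))"
    unfolding ang_eq_def by (intro exI[of _ "- g i0"]) simp
  then have "traced (2*pi) (i0, th0)"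
    unfolding on_trace_def by (intro exI[of _ 1]) (simp add: state_isolated par_isolated)
  moreover have "k \<noteq> 0" using length unfolding ring_length_is_def by auto
  ultimately show ?thesis using length unfolding ring_length_is_def by (cases "k \<ge> 2") auto
qed

lemma traced_isolated_angle: "\<exists>s\<ge>0. traced s (i0, a)"
proof -
  obtain d where d: "0 \<le> d" "d < 2*pi" "ang_eq (th0 + of_int (g i0) * d) a"
    using ang_eq_signed_reachable[OF direction[OF start]] by blast
  then have "traced d (i0, a)"
    unfolding on_trace_def using ang_eq_sym
    by (intro exI[of _ 0]) (simp add: state_isolated par_isolated)
  then show ?thesis using d(1) by blast
qed

lemma card_ring_circles_isolated: "card (ring_circles n c rr f g i0 th0 t) = k"
proof -
  have "ring_circles n c rr f g i0 th0 t = {i0}"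
    unfolding ring_circles_def ring_pts_def
    using start traced_isolated_circle traced_isolated_angle by fastforce
  then show ?thesis using isolated_length by simp
qed

end

lemma card_ring_circles:
  assumes "sync_schedule n c rr f g" "i0 < n" "ring_length_is n c rr g i0 th0 (2 * real k * pi)"
  shows "card (ring_circles n c rr f g i0 th0 t) = k"
proof (cases "nbrs n c rr i0 = {}")
  case True
  then interpret isolated_ring n c rr f g i0 th0 k by unfold_locales (use assms in auto)
  show ?thesis by (rule card_ring_circles_isolated)
next
  case False
  then interpret closed_ring n c rr f g i0 th0 k by unfold_locales (use assms in auto)
  show ?thesis by (rule card_ring_circles_linked)
qed

section \<open>Robots never share a circle\<close>

lemma real_nonneg_induct:
  fixes P :: "real \<Rightarrow> bool"
  assumes step: "\<And>T. 0 \<le> T \<Longrightarrow> (\<And>u. 0 \<le> u \<Longrightarrow> u < T \<Longrightarrow> P u) \<Longrightarrow> P T"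
    and right: "\<And>T. 0 \<le> T \<Longrightarrow> P T \<Longrightarrow> eventually P (at_right T)"
    and "0 \<le> t"
  shows "P t"
proof (rule ccontr)
  assume "\<not> P t"
  define B where "B = {u. 0 \<le> u \<and> \<not> P u}"
  have B: "B \<noteq> {}" "bdd_below B"
    using \<open>\<not> P t\<close> \<open>0 \<le> t\<close> unfolding B_def by (auto intro: bdd_belowI[of _ 0])
  have T0: "0 \<le> Inf B" using B(1) by (intro cInf_greatest) (auto simp: B_def)
  have before: "P u" if "0 \<le> u" "u < Inf B" for u
    using that cInf_lower[OF _ B(2), of u] unfolding B_def by force
  then have "P (Inf B)" using step T0 by blast
  then obtain b where b: "Inf B < b" "\<And>y. Inf B < y \<Longrightarrow> y < b \<Longrightarrow> P y"
    using right[OF T0] unfolding eventually_at_right_field by blast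
  have "b \<le> Inf B"
  proof (rule cInf_greatest[OF B(1)])
    fix u assume "u \<in> B"
    then show "b \<le> u"
      using b(2)[of u] cInf_lower[OF _ B(2), of u] \<open>P (Inf B)\<close> unfolding B_def
      by (cases "u = Inf B") force+
  qed
  then show False using b(1) by simp
qed

lemma present_mono: "present lv r u \<Longrightarrow> s \<le> u \<Longrightarrow> present lv r s"
  unfolding present_def by (cases "lv r") auto

definition distinct_circles :: "nat \<Rightarrow> (nat \<Rightarrow> real option) \<Rightarrow> (nat \<Rightarrow> real \<Rightarrow> nat) \<Rightarrow> real \<Rightarrow> bool"
  where "distinct_circles n lv pos u \<longleftrightarrow> inj_on (\<lambda>r. pos r u) {r. r < n \<and> present lv r u}"

lemma scs_run_start: "scs_run n c rr f g lv pos \<Longrightarrow> r < n \<Longrightarrow> pos r 0 = r"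
  unfolding scs_run_def by (drule conjunct1) blast

lemma scs_run_on_circles:
  "scs_run n c rr f g lv pos \<Longrightarrow> r < n \<Longrightarrow> 0 \<le> t \<Longrightarrow> present lv r t \<Longrightarrow> pos r t < n"
  unfolding scs_run_def by (drule conjunct2, drule conjunct1) blast

lemma scs_run_eventually_const:
  assumes "scs_run n c rr f g lv pos" "r < n" "0 \<le> T" "present lv r T"
  shows "eventually (\<lambda>s. pos r s = pos r T) (at_right T)"
proof -
  have "\<forall>r<n. \<forall>t\<ge>0. present lv r t \<longrightarrow> (\<exists>e>0. \<forall>s. t \<le> s \<and> s < t + e \<longrightarrow> pos r s = pos r t)"
    using assms(1) unfolding scs_run_def by (rule conjunct2[THEN conjunct2, THEN conjunct1])
  then have "\<exists>e>0. \<forall>s. T \<le> s \<and> s < T + e \<longrightarrow> pos r s = pos r T"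
    using assms(2-4) by simp
  then show ?thesis unfolding eventually_at_right_field by (metis add.commute less_add_same_cancel2 less_imp_le)
qed

lemma scs_run_move:
  assumes "scs_run n c rr f g lv pos" "r < n" "T > 0" "present lv r T"
  obtains i where "left_lim pos r T i" "pos r T = i"
  | i j where "left_lim pos r T i" "adj n c rr i j" "ang_eq (sched f g i T) (link c i j)"
      "circle_empty n lv pos j T" "pos r T = j"
proof -
  have "\<forall>r<n. \<forall>t>0. present lv r t \<longrightarrow>
        (\<exists>i. left_lim pos r t i \<and>
           ((\<exists>j. adj n c rr i j \<and> ang_eq (sched f g i t) (link c i j) \<and>
                 circle_empty n lv pos j t \<and> pos r t = j) \<or>
            (\<not> (\<exists>j. adj n c rr i j \<and> ang_eq (sched f g i t) (link c i j) \<and>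
                 circle_empty n lv pos j t) \<and> pos r t = i)))"
    using assms(1) unfolding scs_run_def by (rule conjunct2[THEN conjunct2, THEN conjunct2])
  then obtain i where "left_lim pos r T i"
    "(\<exists>j. adj n c rr i j \<and> ang_eq (sched f g i T) (link c i j) \<and>
        circle_empty n lv pos j T \<and> pos r T = j) \<or> pos r T = i"
    using assms(2-4) by blast
  then show ?thesis using that by blast
qed

lemma circle_empty_left_lim:
  "circle_empty n lv pos j T \<Longrightarrow> r < n \<Longrightarrow> present lv r T \<Longrightarrow> left_lim pos r T i \<Longrightarrow> i \<noteq> j"
  unfolding circle_empty_def by blast

lemma left_lim_distinct:
  assumes before: "\<And>u. 0 \<le> u \<Longrightarrow> u < T \<Longrightarrow> distinct_circles n lv pos u" and "T > 0"
    and r: "r1 < n" "r2 < n" "r1 \<noteq> r2" "present lv r1 T" "present lv r2 T"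
    and lim: "left_lim pos r1 T i1" "left_lim pos r2 T i2"
  shows "i1 \<noteq> i2"
proof -
  obtain e1 where e1: "e1 > 0" "\<And>s. T - e1 < s \<Longrightarrow> s < T \<Longrightarrow> pos r1 s = i1"
    using lim(1) unfolding left_lim_def by blast
  obtain e2 where e2: "e2 > 0" "\<And>s. T - e2 < s \<Longrightarrow> s < T \<Longrightarrow> pos r2 s = i2"
    using lim(2) unfolding left_lim_def by blast
  define d where "d = min (min e1 e2) T"
  have "0 < d" "d \<le> e1" "d \<le> e2" "d \<le> T" unfolding d_def using e1(1) e2(1) \<open>T > 0\<close> by auto
  then have s: "0 \<le> T - d / 2" "T - d / 2 < T" "T - e1 < T - d / 2" "T - e2 < T - d / 2"
    by linarith+
  have "present lv r1 (T - d / 2)" "present lv r2 (T - d / 2)"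
    using present_mono[OF r(4)] present_mono[OF r(5)] s(2) by simp_all
  then have "pos r1 (T - d / 2) \<noteq> pos r2 (T - d / 2)"
    using before[OF s(1,2)] r(1-3) unfolding distinct_circles_def inj_on_def by blast
  then show ?thesis using e1(2) e2(2) s by simp
qed

text \<open>By synchronization both link positions of j would be the scheduled position on j.\<close>
lemma link_partner_unique:
  assumes sync: "sync_schedule n c rr f g" and links: "distinct_links n c rr"
    and "adj n c rr i1 j" "ang_eq (sched f g i1 T) (link c i1 j)"
    and "adj n c rr i2 j" "ang_eq (sched f g i2 T) (link c i2 j)"
  shows "i1 = i2"
proof (rule ccontr)
  assume "i1 \<noteq> i2"
  have "ang_eq (sched f g j T) (link c j i1)" "ang_eq (sched f g j T) (link c j i2)"
    using sync assms(3-6) unfolding sync_schedule_def by blast+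
  then have "ang_eq (link c j i1) (link c j i2)" using ang_eq_sym ang_eq_trans by blast
  moreover have "adj n c rr j i1" "adj n c rr j i2"
    using assms(3,5) unfolding adj_def by (auto simp: dist_commute)
  ultimately show False using links \<open>i1 \<noteq> i2\<close> unfolding distinct_links_def by blast
qed

lemma distinct_circles_at:
  assumes sync: "sync_schedule n c rr f g" and links: "distinct_links n c rr"
    and run: "scs_run n c rr f g lv pos" and "0 \<le> T"
    and before: "\<And>u. 0 \<le> u \<Longrightarrow> u < T \<Longrightarrow> distinct_circles n lv pos u"
  shows "distinct_circles n lv pos T"
proof (cases "T = 0")
  case True
  then show ?thesis using scs_run_start[OF run] unfolding distinct_circles_def inj_on_def by simp
next
  case False
  then have "T > 0" using \<open>0 \<le> T\<close> by simp
  have "pos r1 T \<noteq> pos r2 T"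
    if r: "r1 < n" "r2 < n" "r1 \<noteq> r2" "present lv r1 T" "present lv r2 T" for r1 r2
  proof -
    have lims: "i1 \<noteq> i2" if "left_lim pos r1 T i1" "left_lim pos r2 T i2" for i1 i2
      using left_lim_distinct[OF before \<open>T > 0\<close> r that] .
    show ?thesis
    proof (cases rule: scs_run_move[OF run r(1) \<open>T > 0\<close> r(4)])
      case stay1: (1 i1)
      show ?thesis
      proof (cases rule: scs_run_move[OF run r(2) \<open>T > 0\<close> r(5)])
        case (1 i2)
        then show ?thesis using stay1 lims by simp
      next
        case (2 i2 j2)
        then show ?thesis using stay1 circle_empty_left_lim[OF 2(4) r(1,4) stay1(1)] by simp
      qed
    next
      case switch1: (2 i1 j1)
      show ?thesis
      proof (cases rule: scs_run_move[OF run r(2) \<open>T > 0\<close> r(5)])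
        case (1 i2)
        then show ?thesis using switch1 circle_empty_left_lim[OF switch1(4) r(2,5) 1(1)] by simp
      next
        case (2 i2 j2)
        show ?thesis
        proof
          assume "pos r1 T = pos r2 T"
          then have "adj n c rr i2 j1" "ang_eq (sched f g i2 T) (link c i2 j1)"
            using 2 switch1(5) by simp_all
          then have "i1 = i2" using link_partner_unique[OF sync links switch1(2,3)] by blast
          then show False using lims[OF switch1(1) 2(1)] by simp
        qed
      qed
    qed
  qed
  then show ?thesis unfolding distinct_circles_def inj_on_def by blast
qed

lemma distinct_circles_at_right:
  assumes run: "scs_run n c rr f g lv pos" and "0 \<le> T" and now: "distinct_circles n lv pos T"
  shows "eventually (distinct_circles n lv pos) (at_right T)"
proof -
  let ?R = "{r. r < n \<and> present lv r T}"
  have "eventually (\<lambda>s. pos r s = pos r T) (at_right T)" if "r \<in> ?R" for r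
    using scs_run_eventually_const[OF run _ \<open>0 \<le> T\<close>] that by simp
  then have "eventually (\<lambda>s. \<forall>r\<in>?R. pos r s = pos r T) (at_right T)"
    by (intro eventually_ball_finite) simp_all
  moreover have "eventually (\<lambda>s. T < s) (at_right T)" by (rule eventually_at_right_less)
  ultimately show ?thesis
  proof eventually_elim
    case (elim s)
    have sub: "{r. r < n \<and> present lv r s} \<subseteq> ?R"
      using present_mono[of lv _ s T] elim(2) by auto
    have "inj_on (\<lambda>r. pos r T) {r. r < n \<and> present lv r s}"
      using now sub unfolding distinct_circles_def by (rule inj_on_subset)
    moreover have "pos r s = pos r T" if "r \<in> {r. r < n \<and> present lv r s}" for r
      using elim(1) sub that by blast
    ultimately show ?case unfolding distinct_circles_def
      using inj_on_cong[of "{r. r < n \<and> present lv r s}" "\<lambda>r. pos r s" "\<lambda>r. pos r T"] by simp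
  qed
qed

lemma distinct_circles:
  assumes "sync_schedule n c rr f g" "distinct_links n c rr" "scs_run n c rr f g lv pos" "0 \<le> t"
  shows "distinct_circles n lv pos t"
  using distinct_circles_at[OF assms(1-3)] distinct_circles_at_right[OF assms(3)] assms(4)
  by (rule real_nonneg_induct)

theorem lemma10:
  fixes n :: nat and c :: "nat \<Rightarrow> complex" and rr :: real
    and f :: "nat \<Rightarrow> real" and g :: "nat \<Rightarrow> int"
    and lv :: "nat \<Rightarrow> real option" and pos :: "nat \<Rightarrow> real \<Rightarrow> nat"
    and i0 :: nat and th0 :: real and k :: nat and t :: real
  assumes "trajectory_system n c rr"
    and "distinct_links n c rr"
    and "sync_schedule n c rr f g"
    and "scs_run n c rr f g lv pos"
    and "i0 < n"
    and "ring_length_is n c rr g i0 th0 (2 * real k * pi)"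
    and "t \<ge> 0"
  shows "card (robots_in_ring n c rr f g lv pos i0 th0 t) \<le> k \<and>
    ((\<forall>r<n. present lv r t) \<longrightarrow> card (robots_in_ring n c rr f g lv pos i0 th0 t) = k)"
proof -
  let ?R = "{r. r < n \<and> present lv r t}" and ?C = "ring_circles n c rr f g i0 th0 t"
  let ?A = "robots_in_ring n c rr f g lv pos i0 th0 t" and ?pos = "\<lambda>r. pos r t"
  have inj: "inj_on ?pos ?R"
    using distinct_circles[OF assms(3,2,4,7)] unfolding distinct_circles_def .
  have on_circles: "r < n \<Longrightarrow> present lv r t \<Longrightarrow> pos r t < n" for r
    using scs_run_on_circles[OF assms(4) _ assms(7)] .
  have A: "?A = {r \<in> ?R. pos r t \<in> ?C}"
    unfolding robots_in_ring_def ring_circles_def using on_circles by blast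
  have C: "card ?C = k" using card_ring_circles[OF assms(3,5,6)] .
  have inj_A: "inj_on ?pos ?A" using inj unfolding A by (rule inj_on_subset) blast
  have "finite ?C" unfolding ring_circles_def by simp
  moreover have "?pos ` ?A \<subseteq> ?C" unfolding A by blast
  ultimately have "card ?A \<le> k" using card_inj_on_le[OF inj_A] C by blast
  moreover have "card ?A = k" if "\<forall>r<n. present lv r t"
  proof -
    have R: "?R = {..<n}" using that by auto
    then have "?pos ` {..<n} = {..<n}" using endo_inj_surj[of "{..<n}" ?pos] inj on_circles that by auto
    then have "?pos ` ?A = ?C" unfolding A R ring_circles_def by auto
    then show ?thesis using card_image[OF inj_A] C by simp
  qed
  ultimately show ?thesis by blast
qed

end
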